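(* Let $X$ be a random variable on $\{0,1\}^n$ and $Y$ uniform on $[n]$, independent of $X$. Suppose the statistical distance between the joint distribution of $(X_Y,Y)$ and that of $(U_1,Y)$ (with $U_1$ a uniform bit independent of $Y$) exceeds $\delta$. Then there exists $\alpha\in\{0,1\}^n$ with $$\Pr\Big[d(X,\alpha)\le\tfrac12-\tfrac{\delta}{2}\Big]>\delta,$$ where $d(\cdot,\cdot)$ is the relative Hamming distance.
   Context: $X_Y$ denotes the $Y$-th bit of $X$. The relative Hamming distance between $u,v\in\{0,1\}^n$ is $\frac1n|\{j:u_j\ne v_j\}|$. The statistical distance of two distributions $P,Q$ is $\frac12\sum_w|P(w)-Q(w)|$. *)

theory Defs
  imports "HOL-Probability.Probability"
begin

text \<open>Bit strings in {0,1}^n are boolean lists of length n; bit j (0-indexed) is xs ! j.\<close>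

definition rel_hamming :: "nat \<Rightarrow> bool list \<Rightarrow> bool list \<Rightarrow> real" where
  "rel_hamming n u v = real (card {j. j < n \<and> u ! j \<noteq> v ! j}) / real n"

definition stat_dist :: "'a pmf \<Rightarrow> 'a pmf \<Rightarrow> real" where
  "stat_dist P Q = (1/2) * (\<Sum>\<^sub>\<infinity> w. \<bar>pmf P w - pmf Q w\<bar>)"

end

theory Submission
  imports Defs
begin

(* Let p_i = Pr[X_i = 1]. The proof has three ingredients.
   (1) The joint law of (X_Y, Y) puts mass Pr[X_i = b]/n on (b, i), the law of (U_1, Y) puts
       mass 1/(2n) there, and |Pr[X_i = b] - 1/2| = |p_i - 1/2| for both bits b; hence the
       statistical distance equals (1/n) * sum_i |p_i - 1/2|.
   (2) Let alpha be the bitwise majority string, alpha_i = [p_i >= 1/2]. By linearity of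
       expectation E[d(X, alpha)] = (1/n) * sum_i Pr[X_i ~= alpha_i]
       = 1/2 - (1/n) * sum_i |p_i - 1/2|, i.e. E[d(X, alpha)] = 1/2 - (statistical distance).
   (3) Markov's inequality for the nonnegative variable d(X, alpha) at the threshold
       t = (1 - delta)/2 gives Pr[d(X, alpha) <= t] >= 1 - E[d(X, alpha)]/t, and since
       E[d(X, alpha)] < 1/2 - delta <= t * (1 - delta) the right-hand side exceeds delta. *)

definition bit_prob :: "bool list pmf \<Rightarrow> nat \<Rightarrow> real" where
  "bit_prob X i = measure_pmf.prob X {x. x ! i}"

definition majority_string :: "bool list pmf \<Rightarrow> nat \<Rightarrow> bool list" where
  "majority_string X n = map (\<lambda>i. bit_prob X i \<ge> 1/2) [0..<n]"

lemma prob_bit_False: "measure_pmf.prob X {x. \<not> x ! i} = 1 - bit_prob X i"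
proof -
  have "{x. \<not> x ! i} = space (measure_pmf X) - {x. x ! i}" by auto
  then show ?thesis
    unfolding bit_prob_def using measure_pmf.prob_compl[of "{x. x ! i}" X] by simp
qed

lemma bias_bit_value: "\<bar>measure_pmf.prob X {x. x ! i = b} - 1/2\<bar> = \<bar>bit_prob X i - 1/2\<bar>"
proof (cases b)
  case False
  have "\<bar>(1 - bit_prob X i) - 1/2\<bar> = \<bar>bit_prob X i - 1/2\<bar>" by linarith
  then show ?thesis using False by (simp add: prob_bit_False)
qed (simp add: bit_prob_def)

lemma stat_dist_finite_support:
  assumes "finite F" "set_pmf P \<subseteq> F" "set_pmf Q \<subseteq> F"
  shows "stat_dist P Q = 1/2 * (\<Sum>w\<in>F. \<bar>pmf P w - pmf Q w\<bar>)"
proof -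
  have "pmf P w = 0" "pmf Q w = 0" if "w \<notin> F" for w
    using assms(2,3) that by (meson in_mono set_pmf_iff)+
  then have "(\<Sum>\<^sub>\<infinity> w. \<bar>pmf P w - pmf Q w\<bar>) = (\<Sum>\<^sub>\<infinity> w\<in>F. \<bar>pmf P w - pmf Q w\<bar>)"
    by (intro infsum_cong_neutral) auto
  then show ?thesis
    unfolding stat_dist_def using assms(1) by simp
qed

lemma pmf_bit_at_index:
  fixes X :: "bool list pmf"
  shows "pmf (map_pmf (\<lambda>(x, i). (x ! i, i)) (pair_pmf X U)) (b, i)
     = measure_pmf.prob X {x. x ! i = b} * pmf U i"
proof -
  have "(\<lambda>(x, i). (x ! i, i)) -` {(b, i)} = {x. x ! i = b} \<times> {i}" by auto
  moreover have "countable {x :: bool list. x ! i = b}" by (rule countableI_type)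
  ultimately show ?thesis
    by (simp add: pmf_map measure_pmf_prob_product measure_pmf_single)
qed

lemma stat_dist_bit_at_index:
  fixes X :: "bool list pmf"
  assumes "n > 0"
  shows "stat_dist
           (map_pmf (\<lambda>(x, i). (x ! i, i)) (pair_pmf X (pmf_of_set {0..<n})))
           (pair_pmf (pmf_of_set (UNIV :: bool set)) (pmf_of_set {0..<n}))
         = (\<Sum>i<n. \<bar>bit_prob X i - 1/2\<bar>) / real n"
    (is "stat_dist ?P ?Q = _")
proof -
  have entry: "\<bar>pmf ?P (b, i) - pmf ?Q (b, i)\<bar> = \<bar>bit_prob X i - 1/2\<bar> / real n"
    if "i < n" for b i
  proof -
    let ?q = "measure_pmf.prob X {x. x ! i = b}"
    have "\<bar>pmf ?P (b, i) - pmf ?Q (b, i)\<bar> = \<bar>?q / real n - 1 / (2 * real n)\<bar>"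
      using that by (simp add: pmf_bit_at_index pmf_pair)
    also have "\<dots> = \<bar>?q - 1/2\<bar> / real n"
      using assms by (simp add: field_simps abs_divide)
    finally have "\<bar>pmf ?P (b, i) - pmf ?Q (b, i)\<bar> = \<bar>?q - 1/2\<bar> / real n" .
    then show ?thesis by (simp add: bias_bit_value)
  qed
  have "stat_dist ?P ?Q = 1/2 * (\<Sum>w\<in>UNIV \<times> {0..<n}. \<bar>pmf ?P w - pmf ?Q w\<bar>)"
    using assms by (intro stat_dist_finite_support) (auto simp: set_pair_pmf)
  also have "\<dots> = 1/2 * (\<Sum>b\<in>(UNIV :: bool set). \<Sum>i\<in>{0..<n}. \<bar>bit_prob X i - 1/2\<bar> / real n)"
    by (simp add: sum.cartesian_product' entry)
  also have "\<dots> = (\<Sum>i<n. \<bar>bit_prob X i - 1/2\<bar>) / real n"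
    by (simp add: UNIV_bool atLeast0LessThan sum_divide_distrib)
  finally show ?thesis .
qed


lemma rel_hamming_as_sum:
  "rel_hamming n x \<alpha> = (\<Sum>j<n. indicator {x. x ! j \<noteq> \<alpha> ! j} x) / real n"
proof -
  have "{j. j < n \<and> x ! j \<noteq> \<alpha> ! j} = {..<n} \<inter> {j. x ! j \<noteq> \<alpha> ! j}" by auto
  then show ?thesis
    unfolding rel_hamming_def by (simp add: indicator_def sum.If_cases)
qed

lemma rel_hamming_bounds: "0 \<le> rel_hamming n x \<alpha>" "rel_hamming n x \<alpha> \<le> 1"
proof -
  have "card {j. j < n \<and> x ! j \<noteq> \<alpha> ! j} \<le> card {..<n}"
    by (rule card_mono) auto
  then show "0 \<le> rel_hamming n x \<alpha>" "rel_hamming n x \<alpha> \<le> 1"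
    unfolding rel_hamming_def by (simp_all add: divide_le_eq)
qed

lemma expectation_rel_hamming:
  "measure_pmf.expectation X (\<lambda>x. rel_hamming n x \<alpha>)
     = (\<Sum>j<n. measure_pmf.prob X {x. x ! j \<noteq> \<alpha> ! j}) / real n"
proof -
  have "measure_pmf.expectation X (\<lambda>x. \<Sum>j<n. indicator {x. x ! j \<noteq> \<alpha> ! j} x)
        = (\<Sum>j<n. measure_pmf.prob X {x. x ! j \<noteq> \<alpha> ! j})"
    by (subst Bochner_Integration.integral_sum)
       (auto intro!: measure_pmf.integrable_const_bound[where B=1])
  then show ?thesis by (simp add: rel_hamming_as_sum)
qed

lemma prob_disagree_majority:
  assumes "j < n"
  shows "measure_pmf.prob X {x. x ! j \<noteq> majority_string X n ! j}
           = 1/2 - \<bar>bit_prob X j - 1/2\<bar>"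
proof (cases "bit_prob X j \<ge> 1/2")
  case True
  then show ?thesis using assms by (simp add: majority_string_def prob_bit_False)
next
  case False
  then show ?thesis using assms by (simp add: majority_string_def bit_prob_def)
qed

lemma expectation_distance_to_majority:
  assumes "n > 0"
  shows "measure_pmf.expectation X (\<lambda>x. rel_hamming n x (majority_string X n))
           = 1/2 - (\<Sum>i<n. \<bar>bit_prob X i - 1/2\<bar>) / real n"
proof -
  have "(\<Sum>j<n. measure_pmf.prob X {x. x ! j \<noteq> majority_string X n ! j})
        = (\<Sum>j<n. 1/2 - \<bar>bit_prob X j - 1/2\<bar>)"
    by (rule sum.cong[OF refl], rule prob_disagree_majority) simp
  also have "\<dots> = real n / 2 - (\<Sum>j<n. \<bar>bit_prob X j - 1/2\<bar>)"
    by (simp add: sum_subtractf)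
  finally show ?thesis
    using assms by (simp add: expectation_rel_hamming diff_divide_distrib)
qed

lemma prob_below_threshold:
  fixes M :: "'a pmf" and f :: "'a \<Rightarrow> real"
  assumes "integrable M f" "\<And>x. 0 \<le> f x" "t > 0"
  shows "1 - measure_pmf.expectation M f / t \<le> measure_pmf.prob M {x. f x \<le> t}"
proof -
  have "measure_pmf.prob M {x. t < f x} \<le> measure_pmf.prob M {x. t \<le> f x}"
    by (intro measure_pmf.finite_measure_mono) auto
  also have "\<dots> \<le> measure_pmf.expectation M f / t"
    using integral_Markov_inequality_measure[of M f UNIV t] assms by simp
  finally have "measure_pmf.prob M {x. t < f x} \<le> measure_pmf.expectation M f / t" .
  moreover have "measure_pmf.prob M {x. f x \<le> t} = 1 - measure_pmf.prob M {x. t < f x}"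
    using measure_pmf.prob_compl[of "{x. t < f x}" M] by (simp add: not_less set_diff_eq)
  ultimately show ?thesis by simp
qed

theorem mainTheorem14:
  fixes n :: nat and X :: "bool list pmf" and \<delta> :: real
  assumes "n > 0"
    and "set_pmf X \<subseteq> {xs. length xs = n}"
    and "stat_dist
           (map_pmf (\<lambda>(x, i). (x ! i, i)) (pair_pmf X (pmf_of_set {0..<n})))
           (pair_pmf (pmf_of_set (UNIV :: bool set)) (pmf_of_set {0..<n})) > \<delta>"
  shows "\<exists>\<alpha>. length \<alpha> = n \<and>
           measure_pmf.prob X {x. rel_hamming n x \<alpha> \<le> 1/2 - \<delta>/2} > \<delta>"
proof -
  define \<alpha> where "\<alpha> = majority_string X n"
  define d where "d = (\<lambda>x. rel_hamming n x \<alpha>)"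
  define t where "t = 1/2 - \<delta>/2"
  have expect_d: "measure_pmf.expectation X d < 1/2 - \<delta>"
    using assms(3) expectation_distance_to_majority[OF assms(1), of X]
    by (simp add: stat_dist_bit_at_index[OF assms(1)] d_def \<alpha>_def)
  moreover have "0 \<le> measure_pmf.expectation X d"
    by (simp add: d_def rel_hamming_bounds)
  ultimately have "t > 0" unfolding t_def by linarith
  (* t * (1 - delta) = (1 - delta)^2 / 2 exceeds 1/2 - delta by delta^2 / 2 *)
  have "1/2 - \<delta> \<le> t * (1 - \<delta>)"
    unfolding t_def by (simp add: algebra_simps power2_eq_square)
  with expect_d \<open>t > 0\<close> have "measure_pmf.expectation X d / t < 1 - \<delta>"
    by (simp add: divide_less_eq mult.commute)
  moreover have "1 - measure_pmf.expectation X d / t \<le> measure_pmf.prob X {x. d x \<le> t}"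
    using \<open>t > 0\<close> rel_hamming_bounds
    by (intro prob_below_threshold)
       (auto simp: d_def intro!: measure_pmf.integrable_const_bound[where B=1])
  moreover have "length \<alpha> = n" by (simp add: \<alpha>_def majority_string_def)
  ultimately show ?thesis unfolding d_def t_def by force
qed

end
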